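(* Let $f=c_{20}U_1^2+c_{11}U_1U_2+c_{02}U_2^2\in\mathbb C[U_1,U_2]$ with $c_{20},c_{11},c_{02}\in\mathbb C$. If $\mathcal L(f^m)=0$ for all $m\ge1$, then $f=0$.
   Context: $\mathcal L:\mathbb C[U_1,U_2]\to\mathbb C$ is the $\mathbb C$-linear map defined on monomials by $\mathcal L(U_1^{\ell_1}U_2^{\ell_2})=\ell_1!\,\ell_2!$. *)

theory Defs
  imports "HOL-Computational_Algebra.Polynomial"
begin

text \<open>Bivariate polynomials C[U1,U2] are represented as complex poly poly:
  the outer variable is U2, the inner (coefficient) variable is U1.
  The coefficient of U1^j U2^i in p is coeff (coeff p i) j.\<close>

definition U1 :: "complex poly poly" where "U1 = [:[:0, 1:]:]"
definition U2 :: "complex poly poly" where "U2 = [:0, 1:]"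
definition cst :: "complex \<Rightarrow> complex poly poly" where "cst c = [:[:c:]:]"

definition L :: "complex poly poly \<Rightarrow> complex" where
  "L p = (\<Sum>i\<le>degree p. \<Sum>j\<le>degree (coeff p i).
            coeff (coeff p i) j * of_nat (fact j * fact i))"

end

theory Submission
  imports Defs
begin

(* Write f = a U1^2 + b U1 U2 + c U2^2.  Since L sends U1^i U2^j to i! j!,
   the vanishing of the first three moments L(f), L(f^2), L(f^3) gives three explicit
   polynomial equations in a, b, c:
     L(f)   = 2a + b + 2c,
     L(f^2) = 24a^2 + 12ab + 4b^2 + 8ac + 12bc + 24c^2,
     L(f^3) = 720a^3 + 360a^2b + ... + 720c^3.
   Eliminating b = -2(a+c) and writing s = a + c turns the last two equations into
   2s^2 = 5ac and s(2s^2 - 7ac) = 0, whose only common solution is a = b = c = 0.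
   The file first develops L as a linear functional (through the univariate functional
   Lin, applied to each coefficient in the outer variable U2) and evaluates it on scaled
   monomials, then computes the first three moments of a binary quadratic form, then
   solves the resulting algebraic system, and finally derives the theorem. *)

definition Lin :: "complex poly \<Rightarrow> complex" where
  "Lin q = (\<Sum>j\<le>degree q. coeff q j * of_nat (fact j))"

(* This lets sums over different degrees be
   compared over a common range. *)
lemma sum_upto_degree_extend:
  assumes "degree p \<le> N" and "\<And>i. h 0 i = 0"
  shows "(\<Sum>i\<le>degree p. h (coeff p i) i) = (\<Sum>i\<le>N. h (coeff p i) i)"
proof (rule sum.mono_neutral_left)
  show "\<forall>i\<in>{..N} - {..degree p}. h (coeff p i) i = 0"
    using assms(2) by (auto simp: coeff_eq_0)
qed (use assms(1) in auto)

lemma Lin_upto: "degree q \<le> N \<Longrightarrow> Lin q = (\<Sum>j\<le>N. coeff q j * of_nat (fact j))"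
  unfolding Lin_def using sum_upto_degree_extend[of q N "\<lambda>x j. x * of_nat (fact j)"] by simp

lemma Lin_add: "Lin (p + q) = Lin p + Lin q"
proof -
  define N where "N = max (degree p) (degree q)"
  have "degree (p + q) \<le> N" unfolding N_def by (rule degree_add_le) auto
  then show ?thesis
    by (subst (1 2 3) Lin_upto[of _ N]) (auto simp: N_def sum.distrib distrib_right)
qed

lemma Lin_smult: "Lin (smult c q) = c * Lin q"
  by (subst (1 2) Lin_upto[of _ "degree q"])
     (auto simp: degree_smult_le sum_distrib_left mult.assoc)

lemma Lin_monom: "Lin (monom 1 i) = of_nat (fact i)"
proof -
  have "Lin (monom 1 i) = (\<Sum>j\<le>i. if j = i then of_nat (fact i) else 0)"
    by (subst Lin_upto[of _ i]) (simp add: degree_monom_le, rule sum.cong, auto)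
  then show ?thesis by simp
qed

lemma L_via_Lin: "L p = (\<Sum>i\<le>degree p. Lin (coeff p i) * of_nat (fact i))"
  unfolding L_def Lin_def by (simp add: sum_distrib_right mult.assoc)

lemma L_upto: "degree p \<le> N \<Longrightarrow> L p = (\<Sum>i\<le>N. Lin (coeff p i) * of_nat (fact i))"
  unfolding L_via_Lin
  using sum_upto_degree_extend[of p N "\<lambda>x i. Lin x * of_nat (fact i)"]
  by (simp add: Lin_def)

lemma L_add: "L (p + q) = L p + L q"
proof -
  define N where "N = max (degree p) (degree q)"
  have "degree (p + q) \<le> N" unfolding N_def by (rule degree_add_le) auto
  then show ?thesis
    by (subst (1 2 3) L_upto[of _ N]) (auto simp: N_def sum.distrib distrib_right Lin_add)
qed

(* Multiplication by a scalar constant is scalar multiplication on both levels. *)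
lemma L_cst_mult: "L (cst c * p) = c * L p"
proof -
  have scalar: "cst c * p = smult [:c:] p" by (simp add: cst_def)
  show ?thesis unfolding scalar
    by (subst (1 2) L_upto[of _ "degree p"])
       (auto simp: degree_smult_le sum_distrib_left mult.assoc Lin_smult)
qed

lemma U1_U2_monom: "U1 ^ i * U2 ^ j = monom (monom 1 i) j"
proof -
  have "U1 ^ i = [:monom 1 i:]" by (simp add: U1_def poly_const_pow monom_altdef)
  moreover have "U2 ^ j = monom 1 j" by (simp add: U2_def monom_altdef)
  ultimately show ?thesis by (simp add: smult_monom)
qed

lemma L_monom: "L (monom q j) = Lin q * of_nat (fact j)"
proof -
  have "L (monom q j) = (\<Sum>i\<le>j. if i = j then Lin q * of_nat (fact j) else 0)"
    by (subst L_upto[of _ j]) (simp add: degree_monom_le, rule sum.cong, auto simp: Lin_def)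
  then show ?thesis by simp
qed

lemma L_term: "L (cst k * (U1 ^ i * U2 ^ j)) = k * fact i * fact j"
  by (simp add: L_cst_mult U1_U2_monom L_monom Lin_monom)

lemma cst_add: "cst (x + y) = cst x + cst y" by (simp add: cst_def)
lemma cst_mult: "cst (x * y) = cst x * cst y" by (simp add: cst_def)
lemma cst_power: "cst (x ^ n) = cst x ^ n" by (simp add: cst_def poly_const_pow)
lemma cst_numeral: "cst (numeral n) = numeral n" by (simp add: cst_def numeral_poly)
lemmas cst_hom = cst_add cst_mult cst_power cst_numeral

definition quad :: "complex \<Rightarrow> complex \<Rightarrow> complex \<Rightarrow> complex poly poly" where
  "quad a b c = cst a * U1 ^ 2 + cst b * U1 * U2 + cst c * U2 ^ 2"

lemma quad_eq_0_iff: "quad a b c = 0 \<longleftrightarrow> a = 0 \<and> b = 0 \<and> c = 0"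
proof
  assume "quad a b c = 0"
  then have "coeff (coeff (quad a b c) i) j = 0" for i j by simp
  from this[of 0 2] this[of 1 1] this[of 2 0] show "a = 0 \<and> b = 0 \<and> c = 0"
    by (simp_all add: quad_def cst_def U1_def U2_def power2_eq_square coeff_pCons split: nat.splits)
qed (simp add: quad_def cst_def)

lemma L_quad: "L (quad a b c) = 2*a + b + 2*c"
proof -
  have expansion: "quad a b c = cst a * (U1^2*U2^0) + cst b * (U1^1*U2^1) + cst c * (U1^0*U2^2)"
    unfolding quad_def by (simp add: algebra_simps)
  show ?thesis unfolding expansion L_add L_term by simp
qed

lemma L_quad_sq:
  "L (quad a b c ^ 2) = 24*a^2 + 12*a*b + 4*b^2 + 8*a*c + 12*b*c + 24*c^2"
proof -
  have expansion: "quad a b c ^ 2 = cst (a^2) * (U1^4*U2^0) + cst (2*a*b) * (U1^3*U2^1)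
     + cst (b^2 + 2*a*c) * (U1^2*U2^2) + cst (2*b*c) * (U1^1*U2^3) + cst (c^2) * (U1^0*U2^4)"
    unfolding quad_def cst_hom by (simp add: algebra_simps power2_eq_square power_numeral_reduce)
  show ?thesis unfolding expansion L_add L_term by (simp add: fact_numeral algebra_simps)
qed

lemma L_quad_cube:
  "L (quad a b c ^ 3) = 720*a^3 + 360*a^2*b + 144*a^2*c + 144*a*b^2 + 36*b^3 + 216*a*b*c
                       + 144*a*c^2 + 144*b^2*c + 360*b*c^2 + 720*c^3"
proof -
  have expansion: "quad a b c ^ 3 = cst (a^3) * (U1^6*U2^0) + cst (3*a^2*b) * (U1^5*U2^1)
     + cst (3*a^2*c + 3*a*b^2) * (U1^4*U2^2) + cst (b^3 + 6*a*b*c) * (U1^3*U2^3)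
     + cst (3*a*c^2 + 3*b^2*c) * (U1^2*U2^4) + cst (3*b*c^2) * (U1^1*U2^5)
     + cst (c^3) * (U1^0*U2^6)"
    unfolding quad_def cst_hom
    by (simp add: algebra_simps power2_eq_square power3_eq_cube power_numeral_reduce)
  show ?thesis unfolding expansion L_add L_term by (simp add: fact_numeral algebra_simps)
qed

(* Over the complex numbers the three vanishing moments force a = b = c = 0.  With
   s = a + c the first equation gives b = -2s, and the others reduce to
   2s^2 = 5ac and s(2s^2 - 7ac) = 0; if s were nonzero both would give ac = 0 = s. *)
lemma vanishing_moments_imp_zero:
  fixes a b c :: complex
  assumes m1: "2*a + b + 2*c = 0"
    and m2: "24*a^2 + 12*a*b + 4*b^2 + 8*a*c + 12*b*c + 24*c^2 = 0"
    and m3: "720*a^3 + 360*a^2*b + 144*a^2*c + 144*a*b^2 + 36*b^3 + 216*a*b*c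
             + 144*a*c^2 + 144*b^2*c + 360*b*c^2 + 720*c^3 = 0"
  shows "a = 0 \<and> b = 0 \<and> c = 0"
proof -
  define s where "s = a + c"
  have b: "b = -2*s" using m1 unfolding s_def by algebra
  have "8*(2*s^2 - 5*a*c) = 0"
    using m2 unfolding b s_def by (simp add: algebra_simps power2_eq_square)
  then have q2: "2*s^2 = 5*a*c" by simp
  have "144*(s*(2*s^2 - 7*a*c)) = 0"
    using m3 unfolding b s_def by (simp add: algebra_simps power2_eq_square power3_eq_cube)
  then have q3: "s*(2*s^2 - 7*a*c) = 0" by simp
  have s0: "s = 0"
  proof (rule ccontr)
    assume "s \<noteq> 0"
    with q3 have "2*s^2 = 7*a*c" by simp
    with q2 have "a*c = 0" by algebra
    with q2 have "s^2 = 0" by algebra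
    with \<open>s \<noteq> 0\<close> show False by simp
  qed
  with q2 have "a*c = 0" by simp
  moreover have "c = -a" using s0 unfolding s_def by algebra
  ultimately have "a = 0" "c = 0" by simp_all
  with b s0 show ?thesis by simp
qed

theorem proposition4p14:
  fixes c20 c11 c02 :: complex
  defines "f \<equiv> cst c20 * U1 ^ 2 + cst c11 * U1 * U2 + cst c02 * U2 ^ 2"
  assumes "\<And>m::nat. m \<ge> 1 \<Longrightarrow> L (f ^ m) = 0"
  shows "f = 0"
proof -
  have f: "f = quad c20 c11 c02" unfolding f_def quad_def ..
  have "L f = 0" "L (f ^ 2) = 0" "L (f ^ 3) = 0"
    using assms(2)[of 1] assms(2)[of 2] assms(2)[of 3] by simp_all
  then have "c20 = 0 \<and> c11 = 0 \<and> c02 = 0"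
    unfolding f L_quad L_quad_sq L_quad_cube by (rule vanishing_moments_imp_zero)
  then show ?thesis unfolding f quad_eq_0_iff .
qed

end
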